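(* Let $a,\lambda\in\mathbb{R}^n$ with $\|a\|=\|\lambda\|=1$ and $\lambda\neq\pm a$, and let $d\in\mathbb{R}^m$ with $\|d\|\le1$. Fix $y\in\mathbb{R}^m$. The Lagrangian dual of $$(P)\qquad \max_x\{\lambda^\mathsf{T} x:\|x\|\le\|y\|,\ a^\mathsf{T} x+d^\mathsf{T} y\le0\}$$ is $$(D)\qquad \inf_\theta\{\|\lambda-\theta a\|\,\|y\|-\theta\,d^\mathsf{T} y:\theta\ge0\}.$$ An optimal solution of $(P)$ is $x(y)=\lambda\|y\|$ if $\lambda^\mathsf{T} a\|y\|+d^\mathsf{T} y\le0$, and otherwise $$x(y)=\sqrt{\tfrac{\|y\|^2-(d^\mathsf{T} y)^2}{1-(\lambda^\mathsf{T} a)^2}}\,\lambda-\Big(d^\mathsf{T} y+\lambda^\mathsf{T} a\sqrt{\tfrac{\|y\|^2-(d^\mathsf{T} y)^2}{1-(\lambda^\mathsf{T} a)^2}}\Big)a.$$ An optimal dual solution (with values in $\mathbb{R}_+\cup\{+\infty\}$) is $\theta(y)=0$ if $\lambda^\mathsf{T} a\|y\|+d^\mathsf{T} y\le0$, and otherwise $$\theta(y)=\lambda^\mathsf{T} a+d^\mathsf{T} y\,\frac{\sqrt{1-(\lambda^\mathsf{T} a)^2}}{\sqrt{\|y\|^2-(d^\mathsf{T} y)^2}},$$ with the conventions $1/0=+\infty$ and $r+(+\infty)=+\infty$ (a dual value at $\theta=+\infty$ meaning the limit as $\theta\to+\infty$). Strong duality holds, i.e. the optimal values of $(P)$ and $(D)$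 coincide, and the optimal value of $(P)$ equals $\|y\|$ if $\lambda^\mathsf{T} a\|y\|+d^\mathsf{T} y\le0$ and $\sqrt{(\|y\|^2-(d^\mathsf{T} y)^2)(1-(\lambda^\mathsf{T} a)^2)}-d^\mathsf{T} y\,\lambda^\mathsf{T} a$ otherwise. Finally, this formula for the optimal value of $(P)$ also holds when $\lambda=\pm a$.
   Context: $\|\cdot\|$ is the Euclidean norm. *)

theory Defs
  imports "HOL-Analysis.Analysis" "HOL-Library.Extended_Real"
begin

definition primal_feasible :: "real^'n \<Rightarrow> real^'m \<Rightarrow> real^'m \<Rightarrow> real^'n \<Rightarrow> bool" where
  "primal_feasible a d y x \<longleftrightarrow> norm x \<le> norm y \<and> a \<bullet> x + d \<bullet> y \<le> 0"

definition primal_value :: "real^'n \<Rightarrow> real^'n \<Rightarrow> real^'m \<Rightarrow> real^'m \<Rightarrow> real" where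
  "primal_value a lam d y = Sup {lam \<bullet> x | x. primal_feasible a d y x}"

definition primal_optimal :: "real^'n \<Rightarrow> real^'n \<Rightarrow> real^'m \<Rightarrow> real^'m \<Rightarrow> real^'n \<Rightarrow> bool" where
  "primal_optimal a lam d y x \<longleftrightarrow> primal_feasible a d y x \<and>
     (\<forall>x'. primal_feasible a d y x' \<longrightarrow> lam \<bullet> x' \<le> lam \<bullet> x)"

definition lagrangian :: "real^'n \<Rightarrow> real^'n \<Rightarrow> real^'m \<Rightarrow> real^'m \<Rightarrow> real^'n \<Rightarrow> real \<Rightarrow> real" where
  "lagrangian a lam d y x \<theta> = lam \<bullet> x - \<theta> * (a \<bullet> x + d \<bullet> y)"

definition lagrange_dual_fun :: "real^'n \<Rightarrow> real^'n \<Rightarrow> real^'m \<Rightarrow> real^'m \<Rightarrow> real \<Rightarrow> real" where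
  "lagrange_dual_fun a lam d y \<theta> = Sup {lagrangian a lam d y x \<theta> | x. norm x \<le> norm y}"

definition dual_obj :: "real^'n \<Rightarrow> real^'n \<Rightarrow> real^'m \<Rightarrow> real^'m \<Rightarrow> real \<Rightarrow> real" where
  "dual_obj a lam d y \<theta> = norm (lam - \<theta> *\<^sub>R a) * norm y - \<theta> * (d \<bullet> y)"

definition dual_value :: "real^'n \<Rightarrow> real^'n \<Rightarrow> real^'m \<Rightarrow> real^'m \<Rightarrow> real" where
  "dual_value a lam d y = Inf {dual_obj a lam d y \<theta> | \<theta>. \<theta> \<ge> 0}"

text \<open>Optimality of a dual point in R_+ \<union> {+\<infinity>}; the dual value at +\<infinity> is the limit
  of the dual objective as theta tends to +\<infinity>.\<close>
definition dual_optimal :: "real^'n \<Rightarrow> real^'n \<Rightarrow> real^'m \<Rightarrow> real^'m \<Rightarrow> ereal \<Rightarrow> bool" where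
  "dual_optimal a lam d y \<Theta> \<longleftrightarrow>
     (\<exists>t. \<Theta> = ereal t \<and> t \<ge> 0 \<and> (\<forall>s\<ge>0. dual_obj a lam d y t \<le> dual_obj a lam d y s)) \<or>
     (\<Theta> = \<infinity> \<and> (\<exists>v. (dual_obj a lam d y \<longlongrightarrow> v) at_top \<and> (\<forall>s\<ge>0. v \<le> dual_obj a lam d y s)))"

definition x_opt :: "real^'n \<Rightarrow> real^'n \<Rightarrow> real^'m \<Rightarrow> real^'m \<Rightarrow> real^'n" where
  "x_opt a lam d y =
     (if (lam \<bullet> a) * norm y + d \<bullet> y \<le> 0 then norm y *\<^sub>R lam
      else (let r = sqrt ((norm y ^ 2 - (d \<bullet> y) ^ 2) / (1 - (lam \<bullet> a) ^ 2))
            in r *\<^sub>R lam - (d \<bullet> y + (lam \<bullet> a) * r) *\<^sub>R a))"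

text \<open>The explicit dual solution theta(y), in extended reals (ereal arithmetic realizes the
  conventions 1/0 = +\<infinity> and r + \<infinity> = \<infinity>).\<close>
definition theta_opt :: "real^'n \<Rightarrow> real^'n \<Rightarrow> real^'m \<Rightarrow> real^'m \<Rightarrow> ereal" where
  "theta_opt a lam d y =
     (if (lam \<bullet> a) * norm y + d \<bullet> y \<le> 0 then 0
      else ereal (lam \<bullet> a) + ereal (d \<bullet> y) *
             (ereal (sqrt (1 - (lam \<bullet> a) ^ 2)) / ereal (sqrt (norm y ^ 2 - (d \<bullet> y) ^ 2))))"

definition opt_value_formula :: "real^'n \<Rightarrow> real^'n \<Rightarrow> real^'m \<Rightarrow> real^'m \<Rightarrow> real" where
  "opt_value_formula a lam d y =
     (if (lam \<bullet> a) * norm y + d \<bullet> y \<le> 0 then norm y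
      else sqrt ((norm y ^ 2 - (d \<bullet> y) ^ 2) * (1 - (lam \<bullet> a) ^ 2)) - (d \<bullet> y) * (lam \<bullet> a))"

end

(*
  For feasible x and theta >= 0, Cauchy-Schwarz gives
    lam.x <= lam.x - theta (a.x + d.y) <= |lam - theta a| |y| - theta d.y,
  and the second bound is attained at x parallel to lam - theta a, so it is the
  Lagrangian dual function. Strong duality therefore follows from a feasible x and a
  multiplier with no duality gap. With c = lam.a, s = d.y, R = |y| the dual objective is
  R sqrt(1 - 2 theta c + theta^2) - theta s. If cR + s <= 0, x = R lam and theta = 0 close
  the gap. Otherwise x(y) makes the linear constraint active and has value
  sqrt((R^2 - s^2)(1 - c^2)) - sc, which theta(y) matches when s^2 < R^2; when s = R the
  gap closes only as theta tends to infinity. For lam = a the objective a.x is bounded by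
  -s directly.
*)

theory Submission
  imports Defs "HOL-Real_Asymp.Real_Asymp"
begin

lemma inner_square_less_one_of_unit:
  fixes u v :: "'a::real_inner"
  assumes "norm u = 1" "norm v = 1" "v \<noteq> u" "v \<noteq> - u"
  shows "(v \<bullet> u)\<^sup>2 < 1"
proof -
  have "\<bar>v \<bullet> u\<bar> \<noteq> 1"
    using norm_cauchy_schwarz_abs_eq[of v u] assms by auto
  moreover have "\<bar>v \<bullet> u\<bar> \<le> 1"
    using Cauchy_Schwarz_ineq2[of v u] assms by simp
  ultimately show ?thesis
    by (simp add: abs_square_less_1)
qed

lemma norm_diff_scaleR_unit:
  fixes u v :: "'a::real_inner"
  assumes "norm u = 1" "norm v = 1"
  shows "norm (v - t *\<^sub>R u) = sqrt (1 - 2 * t * (v \<bullet> u) + t\<^sup>2)"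
proof -
  have "u \<bullet> u = 1" "v \<bullet> v = 1"
    using assms by (simp_all flip: power2_norm_eq_inner)
  then have "(norm (v - t *\<^sub>R u))\<^sup>2 = 1 - 2 * t * (v \<bullet> u) + t\<^sup>2"
    unfolding power2_norm_eq_inner
    by (simp add: inner_diff_left inner_diff_right inner_commute[of u v] power2_eq_square
        algebra_simps)
  then show ?thesis
    by (metis norm_ge_zero real_sqrt_unique)
qed

lemma abs_inner_le_norm_of_norm_le_1:
  fixes d y :: "'a::real_inner"
  assumes "norm d \<le> 1"
  shows "\<bar>d \<bullet> y\<bar> \<le> norm y"
  using Cauchy_Schwarz_ineq2[of d y] mult_right_mono[OF assms norm_ge_zero[of y]] by simp

lemma active_multiplier_nonneg:
  fixes c s p q R :: real
  assumes "p\<^sup>2 = 1 - c\<^sup>2" "q\<^sup>2 = R\<^sup>2 - s\<^sup>2" "p > 0" "q > 0" "R \<ge> 0" "c * R + s > 0"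
  shows "c + s * p / q \<ge> 0"
proof -
  \<comment> \<open>With (c, p) = (cos \<alpha>, sin \<alpha>) and (s, q) = R (cos \<beta>, sin \<beta>) this is
    sin (\<alpha> + \<beta>) (sin \<alpha> + sin \<beta>) = (1 - cos (\<alpha> + \<beta>)) (cos \<alpha> + cos \<beta>).\<close>
  have "(c * q + s * p) * (p * R + q) - (R - c * s + p * q) * (c * R + s) =
      c * (q\<^sup>2 + s\<^sup>2 - R\<^sup>2) + s * R * (p\<^sup>2 + c\<^sup>2 - 1)"
    by (simp add: power2_eq_square algebra_simps)
  then have key: "(c * q + s * p) * (p * R + q) = (R - c * s + p * q) * (c * R + s)"
    using assms(1,2) by simp
  have "(c * s - p * q)\<^sup>2 + (c * q + s * p)\<^sup>2 = (c\<^sup>2 + p\<^sup>2) * (s\<^sup>2 + q\<^sup>2)"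
    by (simp add: power2_eq_square algebra_simps)
  then have "(c * s - p * q)\<^sup>2 + (c * q + s * p)\<^sup>2 = R\<^sup>2"
    using assms(1,2) by simp
  then have "(c * s - p * q)\<^sup>2 \<le> R\<^sup>2"
    using zero_le_power2[of "c * q + s * p"] by linarith
  then have "c * s - p * q \<le> R"
    using assms(5) real_le_rsqrt by fastforce
  then have "(c * q + s * p) * (p * R + q) \<ge> 0"
    unfolding key using assms(6) by simp
  moreover have "p * R + q > 0"
    using assms(3-5) by (simp add: add_nonneg_pos)
  ultimately have "c * q + s * p \<ge> 0"
    by (simp add: zero_le_mult_iff)
  then show ?thesis
    using assms(4) by (simp add: field_simps)
qed

lemma dual_obj_at_active_multiplier:
  fixes c s p q R :: real
  assumes "p\<^sup>2 = 1 - c\<^sup>2" "q\<^sup>2 = R\<^sup>2 - s\<^sup>2" "p > 0" "q > 0" "R \<ge> 0"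
  defines "t \<equiv> c + s * p / q"
  shows "sqrt (1 - 2 * t * c + t\<^sup>2) * R - t * s = p * q - s * c"
proof -
  have "1 - 2 * t * c + t\<^sup>2 = (1 - c\<^sup>2) + (s * p / q)\<^sup>2"
    by (simp add: t_def power2_eq_square algebra_simps)
  also have "\<dots> = p\<^sup>2 + (s * p / q)\<^sup>2"
    using assms(1) by simp
  also have "\<dots> = p\<^sup>2 * (q\<^sup>2 + s\<^sup>2) / q\<^sup>2"
    using assms(4) by (simp add: field_simps power2_eq_square)
  also have "\<dots> = (R * p / q)\<^sup>2"
    using assms(2) by (simp add: power_mult_distrib power_divide)
  finally have "sqrt (1 - 2 * t * c + t\<^sup>2) * R = R * p / q * R"
    using assms(3-5) by simp
  also have "\<dots> = p * (q\<^sup>2 + s\<^sup>2) / q"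
    using assms(2) by (simp add: power2_eq_square)
  also have "\<dots> = p * q + s * p * s / q"
    using assms(4) by (simp add: field_simps power2_eq_square)
  finally show ?thesis
    by (simp add: t_def algebra_simps)
qed

lemma lagrangian_le_dual_obj:
  assumes "norm x \<le> norm y"
  shows "lagrangian a lam d y x \<theta> \<le> dual_obj a lam d y \<theta>"
proof -
  have "lagrangian a lam d y x \<theta> = (lam - \<theta> *\<^sub>R a) \<bullet> x - \<theta> * (d \<bullet> y)"
    by (simp add: lagrangian_def inner_diff_left algebra_simps)
  also have "\<dots> \<le> norm (lam - \<theta> *\<^sub>R a) * norm x - \<theta> * (d \<bullet> y)"
    using norm_cauchy_schwarz by simp
  also have "\<dots> \<le> dual_obj a lam d y \<theta>"
    using assms by (simp add: dual_obj_def mult_left_mono)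
  finally show ?thesis .
qed

lemma lagrangian_attains_dual_obj:
  "\<exists>x. norm x \<le> norm y \<and> lagrangian a lam d y x \<theta> = dual_obj a lam d y \<theta>"
proof -
  define w where "w = lam - \<theta> *\<^sub>R a"
  define x where "x = (if w = 0 then 0 else (norm y / norm w) *\<^sub>R w)"
  have "w \<bullet> x = norm w * norm y"
    by (auto simp: x_def power2_norm_eq_inner[symmetric] power2_eq_square)
  then have "lagrangian a lam d y x \<theta> = dual_obj a lam d y \<theta>"
    by (simp add: lagrangian_def dual_obj_def w_def inner_diff_left algebra_simps)
  moreover have "norm x \<le> norm y"
    by (simp add: x_def)
  ultimately show ?thesis
    by blast
qed

lemma lagrange_dual_fun_eq_dual_obj:
  "lagrange_dual_fun a lam d y \<theta> = dual_obj a lam d y \<theta>"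
  unfolding lagrange_dual_fun_def
proof (rule cSup_eq_maximum)
  show "dual_obj a lam d y \<theta> \<in> {lagrangian a lam d y x \<theta> |x. norm x \<le> norm y}"
    using lagrangian_attains_dual_obj by (metis (mono_tags, lifting) mem_Collect_eq)
qed (auto intro: lagrangian_le_dual_obj)

lemma weak_duality:
  assumes "primal_feasible a d y x" "\<theta> \<ge> 0"
  shows "lam \<bullet> x \<le> dual_obj a lam d y \<theta>"
proof -
  have "lam \<bullet> x \<le> lagrangian a lam d y x \<theta>"
    using assms by (simp add: primal_feasible_def lagrangian_def mult_nonneg_nonpos)
  also have "\<dots> \<le> dual_obj a lam d y \<theta>"
    using assms(1) by (simp add: primal_feasible_def lagrangian_le_dual_obj)
  finally show ?thesis .
qed

lemma primal_value_eq_optimal: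
  assumes "primal_optimal a lam d y x"
  shows "primal_value a lam d y = lam \<bullet> x"
  unfolding primal_value_def
  using assms by (intro cSup_eq_maximum) (auto simp: primal_optimal_def)

lemma strong_duality_finite:
  assumes x: "primal_feasible a d y x" and "\<theta> \<ge> 0"
    and no_gap: "dual_obj a lam d y \<theta> = lam \<bullet> x"
  shows "primal_optimal a lam d y x" "dual_optimal a lam d y (ereal \<theta>)"
    "primal_value a lam d y = lam \<bullet> x" "dual_value a lam d y = lam \<bullet> x"
proof -
  show "primal_optimal a lam d y x"
    using x no_gap weak_duality[of a d y _ \<theta> lam] \<open>\<theta> \<ge> 0\<close>
    by (auto simp: primal_optimal_def)
  then show "primal_value a lam d y = lam \<bullet> x"
    by (rule primal_value_eq_optimal)
  have min: "\<forall>\<theta>'\<ge>0. dual_obj a lam d y \<theta> \<le> dual_obj a lam d y \<theta>'"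
    using weak_duality[OF x] no_gap by simp
  then show "dual_optimal a lam d y (ereal \<theta>)"
    using \<open>\<theta> \<ge> 0\<close> by (auto simp: dual_optimal_def)
  show "dual_value a lam d y = lam \<bullet> x"
    unfolding dual_value_def no_gap[symmetric]
    using min \<open>\<theta> \<ge> 0\<close> by (intro cInf_eq_minimum) auto
qed

lemma strong_duality_at_top:
  assumes x: "primal_feasible a d y x"
    and lim: "(dual_obj a lam d y \<longlongrightarrow> lam \<bullet> x) at_top"
  shows "primal_optimal a lam d y x" "dual_optimal a lam d y \<infinity>"
    "primal_value a lam d y = lam \<bullet> x" "dual_value a lam d y = lam \<bullet> x"
proof -
  have limit_le: "v \<le> lam \<bullet> x" if "\<forall>\<theta>\<ge>0. v \<le> dual_obj a lam d y \<theta>" for v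
  proof (rule tendsto_lowerbound[OF lim])
    show "\<forall>\<^sub>F \<theta> in at_top. v \<le> dual_obj a lam d y \<theta>"
      using that by (intro eventually_mono[OF eventually_ge_at_top[of 0]]) auto
  qed simp
  show "primal_optimal a lam d y x"
    using x weak_duality[of a d y _ _ lam] limit_le by (simp add: primal_optimal_def)
  then show "primal_value a lam d y = lam \<bullet> x"
    by (rule primal_value_eq_optimal)
  show "dual_optimal a lam d y \<infinity>"
    unfolding dual_optimal_def using lim weak_duality[OF x] by blast
  show "dual_value a lam d y = lam \<bullet> x"
    unfolding dual_value_def
  proof (rule cInf_eq_non_empty)
    fix v
    assume "\<And>z. z \<in> {dual_obj a lam d y \<theta> |\<theta>. 0 \<le> \<theta>} \<Longrightarrow> v \<le> z"
    then show "v \<le> lam \<bullet> x"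
      by (intro limit_le) blast
  qed (use weak_duality[OF x] in auto)
qed

lemma dual_obj_unit:
  assumes "norm a = 1" "norm lam = 1"
  shows "dual_obj a lam d y \<theta> = sqrt (1 - 2 * \<theta> * (lam \<bullet> a) + \<theta>\<^sup>2) * norm y - \<theta> * (d \<bullet> y)"
  using norm_diff_scaleR_unit[OF assms] by (simp add: dual_obj_def)

lemma optimal_pair_inactive:
  assumes "norm lam = 1" and inactive: "(lam \<bullet> a) * norm y + d \<bullet> y \<le> 0"
  shows "primal_feasible a d y (x_opt a lam d y)" "theta_opt a lam d y = ereal 0"
    "dual_obj a lam d y 0 = lam \<bullet> x_opt a lam d y"
    "lam \<bullet> x_opt a lam d y = opt_value_formula a lam d y"
proof -
  have x: "x_opt a lam d y = norm y *\<^sub>R lam"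
    using inactive by (simp add: x_opt_def)
  have "lam \<bullet> lam = 1"
    using assms(1) by (simp flip: power2_norm_eq_inner)
  then have "lam \<bullet> x_opt a lam d y = norm y"
    by (simp add: x)
  then show "dual_obj a lam d y 0 = lam \<bullet> x_opt a lam d y"
    "lam \<bullet> x_opt a lam d y = opt_value_formula a lam d y"
    using assms by (simp_all add: dual_obj_def opt_value_formula_def)
  show "primal_feasible a d y (x_opt a lam d y)"
    using assms by (simp add: x primal_feasible_def inner_commute mult.commute)
  show "theta_opt a lam d y = ereal 0"
    using inactive by (simp add: theta_opt_def zero_ereal_def)
qed

lemma x_opt_active:
  assumes "norm a = 1" "norm lam = 1" "(lam \<bullet> a)\<^sup>2 < 1" "\<bar>d \<bullet> y\<bar> \<le> norm y"
    and active: "(lam \<bullet> a) * norm y + d \<bullet> y > 0"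
  shows "primal_feasible a d y (x_opt a lam d y)"
    "lam \<bullet> x_opt a lam d y = opt_value_formula a lam d y"
proof -
  define c s R where "c = lam \<bullet> a" and "s = d \<bullet> y" and "R = norm y"
  define p q where "p = sqrt (1 - c\<^sup>2)" and "q = sqrt (R\<^sup>2 - s\<^sup>2)"
  define r where "r = q / p"
  have p: "p > 0" "p\<^sup>2 = 1 - c\<^sup>2"
    using assms(3) by (simp_all add: p_def c_def)
  have "s\<^sup>2 \<le> R\<^sup>2"
    using assms(4) abs_le_square_iff[of s R] by (simp add: s_def R_def)
  then have q: "q\<^sup>2 = R\<^sup>2 - s\<^sup>2"
    by (simp add: q_def)
  have x: "x_opt a lam d y = r *\<^sub>R lam - (s + c * r) *\<^sub>R a"
    using active by (simp add: x_opt_def r_def p_def q_def c_def s_def R_def real_sqrt_divide)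
  have unit: "a \<bullet> a = 1" "lam \<bullet> lam = 1" "a \<bullet> lam = c"
    using assms(1,2) by (simp_all add: c_def inner_commute flip: power2_norm_eq_inner)
  have rp: "r * p\<^sup>2 = q * p" "r\<^sup>2 * p\<^sup>2 = q\<^sup>2"
    using p(1) by (simp_all add: r_def power2_eq_square)
  have "(norm (x_opt a lam d y))\<^sup>2 = r\<^sup>2 * (1 - c\<^sup>2) + s\<^sup>2"
    unfolding power2_norm_eq_inner x
    by (simp add: inner_diff_left inner_diff_right unit inner_commute[of lam a]
        power2_eq_square algebra_simps)
  then have "(norm (x_opt a lam d y))\<^sup>2 = R\<^sup>2"
    using rp(2) p(2) q by simp
  then have "norm (x_opt a lam d y) = norm y"
    by (simp add: R_def power2_eq_iff_nonneg)
  moreover have "a \<bullet> x_opt a lam d y = - s"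
    by (simp add: x inner_diff_right unit)
  ultimately show "primal_feasible a d y (x_opt a lam d y)"
    by (simp add: primal_feasible_def s_def)
  have "lam \<bullet> x_opt a lam d y = r * (1 - c\<^sup>2) - s * c"
    by (simp add: x inner_diff_right unit c_def power2_eq_square algebra_simps)
  also have "\<dots> = q * p - s * c"
    using rp(1) p(2) by simp
  also have "\<dots> = opt_value_formula a lam d y"
    using active by (simp add: opt_value_formula_def p_def q_def c_def s_def R_def real_sqrt_mult)
  finally show "lam \<bullet> x_opt a lam d y = opt_value_formula a lam d y" .
qed

lemma theta_opt_active_finite:
  assumes "norm a = 1" "norm lam = 1" "(lam \<bullet> a)\<^sup>2 < 1" "(d \<bullet> y)\<^sup>2 < (norm y)\<^sup>2"
    and active: "(lam \<bullet> a) * norm y + d \<bullet> y > 0"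
  obtains \<theta> where "\<theta> \<ge> 0" "theta_opt a lam d y = ereal \<theta>"
    "dual_obj a lam d y \<theta> = opt_value_formula a lam d y"
proof
  define c s R where "c = lam \<bullet> a" and "s = d \<bullet> y" and "R = norm y"
  define p q where "p = sqrt (1 - c\<^sup>2)" and "q = sqrt (R\<^sup>2 - s\<^sup>2)"
  have p: "p > 0" "p\<^sup>2 = 1 - c\<^sup>2"
    using assms(3) by (simp_all add: p_def c_def)
  have q: "q > 0" "q\<^sup>2 = R\<^sup>2 - s\<^sup>2"
    using assms(4) by (simp_all add: q_def s_def R_def)
  have R: "R \<ge> 0"
    by (simp add: R_def)
  show "c + s * p / q \<ge> 0"
    using active_multiplier_nonneg[OF p(2) q(2) p(1) q(1) R] active by (simp add: c_def s_def R_def)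
  show "theta_opt a lam d y = ereal (c + s * p / q)"
    using active q(1) by (simp add: theta_opt_def p_def q_def c_def s_def R_def)
  have "dual_obj a lam d y (c + s * p / q) = p * q - s * c"
    using dual_obj_at_active_multiplier[OF p(2) q(2) p(1) q(1) R]
    by (simp add: dual_obj_unit[OF assms(1,2)] c_def s_def R_def)
  also have "\<dots> = opt_value_formula a lam d y"
    using active by (simp add: opt_value_formula_def p_def q_def c_def s_def R_def
        real_sqrt_mult mult.commute)
  finally show "dual_obj a lam d y (c + s * p / q) = opt_value_formula a lam d y" .
qed

(* Slater's condition fails here (the only feasible point is -|y| a), which is why no finite
   multiplier closes the gap. *)
lemma theta_opt_active_infinite:
  assumes "norm a = 1" "norm lam = 1" "(lam \<bullet> a)\<^sup>2 < 1" "(d \<bullet> y)\<^sup>2 = (norm y)\<^sup>2"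
    and active: "(lam \<bullet> a) * norm y + d \<bullet> y > 0"
  shows "theta_opt a lam d y = \<infinity>"
    "(dual_obj a lam d y \<longlongrightarrow> opt_value_formula a lam d y) at_top"
proof -
  define c R where "c = lam \<bullet> a" and "R = norm y"
  have "c < 1"
    using assms(3) by (simp add: c_def abs_square_less_1)
  have "d \<bullet> y = R \<or> d \<bullet> y = - R"
    using assms(4) by (simp add: R_def power2_eq_iff)
  then have s: "d \<bullet> y = R" and "R > 0"
    using active \<open>c < 1\<close> mult_right_mono[of c 1 R]
    by (auto simp: c_def R_def not_less[symmetric])
  then show "theta_opt a lam d y = \<infinity>"
    using assms(3) active by (simp add: theta_opt_def s c_def R_def)
  have "dual_obj a lam d y = (\<lambda>\<theta>. sqrt (1 - 2 * \<theta> * c + \<theta>\<^sup>2) * R - \<theta> * R)"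
    by (simp add: fun_eq_iff dual_obj_unit[OF assms(1,2)] s c_def R_def)
  moreover have "((\<lambda>\<theta>. sqrt (1 - 2 * \<theta> * c + \<theta>\<^sup>2) * R - \<theta> * R) \<longlongrightarrow> - R * c) at_top"
    by real_asymp
  ultimately show "(dual_obj a lam d y \<longlongrightarrow> opt_value_formula a lam d y) at_top"
    using active by (simp add: opt_value_formula_def s c_def R_def)
qed

lemma primal_value_parallel:
  assumes "norm a = 1" "lam = a \<or> lam = - a" "\<bar>d \<bullet> y\<bar> \<le> norm y"
    and active: "(lam \<bullet> a) * norm y + d \<bullet> y > 0"
  shows "primal_value a lam d y = opt_value_formula a lam d y"
proof -
  have aa: "a \<bullet> a = 1"
    using assms(1) by (simp flip: power2_norm_eq_inner)
  have lam: "lam = a"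
    using assms(2-4) aa by auto
  have "primal_optimal a lam d y (- (d \<bullet> y) *\<^sub>R a)"
    using assms(1,3) aa by (simp add: primal_optimal_def primal_feasible_def lam)
  then have "primal_value a lam d y = - (d \<bullet> y)"
    by (simp add: primal_value_eq_optimal lam aa)
  also have "\<dots> = opt_value_formula a lam d y"
    using active by (simp add: opt_value_formula_def lam aa)
  finally show ?thesis .
qed

theorem propositionA1:
  fixes a lam :: "real^'n" and d y :: "real^'m"
  assumes "norm a = 1" and "norm lam = 1" and "norm d \<le> 1"
  shows "(lam \<noteq> a \<and> lam \<noteq> - a \<longrightarrow>
            (\<forall>\<theta>\<ge>0. lagrange_dual_fun a lam d y \<theta> = dual_obj a lam d y \<theta>) \<and>
            primal_optimal a lam d y (x_opt a lam d y) \<and>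
            dual_optimal a lam d y (theta_opt a lam d y) \<and>
            primal_value a lam d y = dual_value a lam d y) \<and>
         primal_value a lam d y = opt_value_formula a lam d y"
proof -
  have s_le: "\<bar>d \<bullet> y\<bar> \<le> norm y"
    using assms(3) by (rule abs_inner_le_norm_of_norm_le_1)
  have dual_fun: "\<forall>\<theta>\<ge>0. lagrange_dual_fun a lam d y \<theta> = dual_obj a lam d y \<theta>"
    by (simp add: lagrange_dual_fun_eq_dual_obj)
  have "(d \<bullet> y)\<^sup>2 \<le> (norm y)\<^sup>2"
    using s_le abs_le_square_iff[of "d \<bullet> y" "norm y"] by simp
  then consider (inactive) "(lam \<bullet> a) * norm y + d \<bullet> y \<le> 0"
    | (parallel) "(lam \<bullet> a) * norm y + d \<bullet> y > 0" "lam = a \<or> lam = - a"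
    | (interior) "(lam \<bullet> a) * norm y + d \<bullet> y > 0" "(lam \<bullet> a)\<^sup>2 < 1" "(d \<bullet> y)\<^sup>2 < (norm y)\<^sup>2"
    | (boundary) "(lam \<bullet> a) * norm y + d \<bullet> y > 0" "(lam \<bullet> a)\<^sup>2 < 1" "(d \<bullet> y)\<^sup>2 = (norm y)\<^sup>2"
    using inner_square_less_one_of_unit[OF assms(1,2)] by fastforce
  then show ?thesis
  proof cases
    case inactive
    note pair = optimal_pair_inactive[OF assms(2) inactive]
    show ?thesis
      using strong_duality_finite[OF pair(1) _ pair(3)] pair(2,4) dual_fun by simp
  next
    case parallel
    then show ?thesis
      using primal_value_parallel[OF assms(1) parallel(2) s_le parallel(1)] by blast
  next
    case interior
    note x = x_opt_active[OF assms(1,2) interior(2) s_le interior(1)]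
    obtain \<theta> where "\<theta> \<ge> 0" "theta_opt a lam d y = ereal \<theta>"
      "dual_obj a lam d y \<theta> = opt_value_formula a lam d y"
      using theta_opt_active_finite[OF assms(1,2) interior(2,3,1)] .
    then show ?thesis
      using strong_duality_finite[OF x(1), of \<theta> lam] x(2) dual_fun by simp
  next
    case boundary
    note x = x_opt_active[OF assms(1,2) boundary(2) s_le boundary(1)]
    note \<theta> = theta_opt_active_infinite[OF assms(1,2) boundary(2,3,1)]
    show ?thesis
      using strong_duality_at_top[OF x(1)] \<theta> x(2) dual_fun by simp
  qed
qed

end
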